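(* Let $N$ be a strictly reflexive object of a compact closed category $(\mathcal C,\otimes,I)$ with trivial scalars, so that $N^*\otimes N=N$ and $N\otimes N=N$, and let $\Delta,\nabla\in\mathcal C(N,N)$ be the split and merge arrows of the standard Frobenius algebra at $N=N^*\otimes N$. Then (1) $\nabla\Delta=1_N$; (2) $\Delta\nabla=1_N$ if and only if $N$ is a unit object of the one-object semi-monoidal category $(\mathcal C(N,N),\otimes)$.
   Context: Strictly reflexive: $[N\to N]=N^*\otimes N=N$ with $\mathrm{app},\mathrm{lam}$ identity arrows (and then also $N^*=N$, $N\otimes N=N$). Trivial scalars: $\mathcal C(I,I)=\{1_I\}$. The standard Frobenius algebra at $X^*\otimes X$: split $\Delta=(1_{X^*}\otimes\eta_X\otimes1_X)\circ(X^*\otimes X\cong X^*\otimes I\otimes X)$, merge $\nabla=(X^*\otimes I\otimes X\cong X^*\otimes X)\circ(1_{X^*}\otimes\epsilon_{X^*}\otimes1_X)$, here with $X=N$. A (Saavedra) unit object of a semi-monoidal category is an object $U$ with $U\cong U\otimes U$ such that $U\otimes(-)$ and $(-)\otimes U$ are fully faithful; for the one-object category $(\mathcal C(N,N),\otimes)$ this means the maps $f\mapsto1_N\otimes f$ and $f\mapsto f\otimes1_N$ on $\mathcal C(N,N)$ are bijections. *)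

theory Defs
  imports Main
begin

text \<open>A category is given by a type of objects 'o and a type of arrows 'm
  (every element of 'm is an arrow), with domain/codomain maps, composition
  (comp g f = g after f, meaningful when cod f = dom g) and identities.\<close>

record ('o, 'm) cc =
  cdom   :: "'m \<Rightarrow> 'o"
  ccod   :: "'m \<Rightarrow> 'o"
  ccomp  :: "'m \<Rightarrow> 'm \<Rightarrow> 'm"
  cid    :: "'o \<Rightarrow> 'm"
  ctens  :: "'o \<Rightarrow> 'o \<Rightarrow> 'o"
  ctensA :: "'m \<Rightarrow> 'm \<Rightarrow> 'm"
  cunit  :: "'o"
  calpha  :: "'o \<Rightarrow> 'o \<Rightarrow> 'o \<Rightarrow> 'm"
  calphai :: "'o \<Rightarrow> 'o \<Rightarrow> 'o \<Rightarrow> 'm"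
  clam   :: "'o \<Rightarrow> 'm"
  clami  :: "'o \<Rightarrow> 'm"
  crho   :: "'o \<Rightarrow> 'm"
  crhoi  :: "'o \<Rightarrow> 'm"
  csym   :: "'o \<Rightarrow> 'o \<Rightarrow> 'm"
  cdual  :: "'o \<Rightarrow> 'o"
  ceta   :: "'o \<Rightarrow> 'm"
  ceps   :: "'o \<Rightarrow> 'm"

definition hom :: "('o, 'm) cc \<Rightarrow> 'o \<Rightarrow> 'o \<Rightarrow> 'm set" where
  "hom C A B = {f. cdom C f = A \<and> ccod C f = B}"

definition is_category :: "('o, 'm) cc \<Rightarrow> bool" where
  "is_category C \<longleftrightarrow>
     (\<forall>A. cid C A \<in> hom C A A) \<and>
     (\<forall>f g. ccod C f = cdom C g \<longrightarrow> ccomp C g f \<in> hom C (cdom C f) (ccod C g)) \<and>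
     (\<forall>f. ccomp C (cid C (ccod C f)) f = f \<and> ccomp C f (cid C (cdom C f)) = f) \<and>
     (\<forall>f g h. ccod C f = cdom C g \<and> ccod C g = cdom C h \<longrightarrow>
        ccomp C h (ccomp C g f) = ccomp C (ccomp C h g) f)"

definition is_monoidal :: "('o, 'm) cc \<Rightarrow> bool" where
  "is_monoidal C \<longleftrightarrow>
     is_category C \<and>
     \<comment> \<open>tensor is a bifunctor\<close>
     (\<forall>f g. ctensA C f g \<in> hom C (ctens C (cdom C f) (cdom C g)) (ctens C (ccod C f) (ccod C g))) \<and>
     (\<forall>A B. ctensA C (cid C A) (cid C B) = cid C (ctens C A B)) \<and>
     (\<forall>f g h k. ccod C f = cdom C g \<and> ccod C h = cdom C k \<longrightarrow>
        ctensA C (ccomp C g f) (ccomp C k h) = ccomp C (ctensA C g k) (ctensA C f h)) \<and>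
     \<comment> \<open>associator: natural isomorphism\<close>
     (\<forall>A B D. calpha C A B D \<in> hom C (ctens C (ctens C A B) D) (ctens C A (ctens C B D)) \<and>
              calphai C A B D \<in> hom C (ctens C A (ctens C B D)) (ctens C (ctens C A B) D) \<and>
              ccomp C (calphai C A B D) (calpha C A B D) = cid C (ctens C (ctens C A B) D) \<and>
              ccomp C (calpha C A B D) (calphai C A B D) = cid C (ctens C A (ctens C B D))) \<and>
     (\<forall>f g h. ccomp C (calpha C (ccod C f) (ccod C g) (ccod C h)) (ctensA C (ctensA C f g) h)
            = ccomp C (ctensA C f (ctensA C g h)) (calpha C (cdom C f) (cdom C g) (cdom C h))) \<and>
     \<comment> \<open>left unitor: natural isomorphism\<close>
     (\<forall>A. clam C A \<in> hom C (ctens C (cunit C) A) A \<and>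
          clami C A \<in> hom C A (ctens C (cunit C) A) \<and>
          ccomp C (clami C A) (clam C A) = cid C (ctens C (cunit C) A) \<and>
          ccomp C (clam C A) (clami C A) = cid C A) \<and>
     (\<forall>f. ccomp C (clam C (ccod C f)) (ctensA C (cid C (cunit C)) f) = ccomp C f (clam C (cdom C f))) \<and>
     \<comment> \<open>right unitor: natural isomorphism\<close>
     (\<forall>A. crho C A \<in> hom C (ctens C A (cunit C)) A \<and>
          crhoi C A \<in> hom C A (ctens C A (cunit C)) \<and>
          ccomp C (crhoi C A) (crho C A) = cid C (ctens C A (cunit C)) \<and>
          ccomp C (crho C A) (crhoi C A) = cid C A) \<and>
     (\<forall>f. ccomp C (crho C (ccod C f)) (ctensA C f (cid C (cunit C))) = ccomp C f (crho C (cdom C f))) \<and>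
     \<comment> \<open>pentagon\<close>
     (\<forall>A B D E.
        ccomp C (calpha C A B (ctens C D E)) (calpha C (ctens C A B) D E)
        = ccomp C (ctensA C (cid C A) (calpha C B D E))
            (ccomp C (calpha C A (ctens C B D) E) (ctensA C (calpha C A B D) (cid C E)))) \<and>
     \<comment> \<open>triangle\<close>
     (\<forall>A B. ccomp C (ctensA C (cid C A) (clam C B)) (calpha C A (cunit C) B)
            = ctensA C (crho C A) (cid C B))"

definition is_symmetric_monoidal :: "('o, 'm) cc \<Rightarrow> bool" where
  "is_symmetric_monoidal C \<longleftrightarrow>
     is_monoidal C \<and>
     (\<forall>A B. csym C A B \<in> hom C (ctens C A B) (ctens C B A) \<and>
            ccomp C (csym C B A) (csym C A B) = cid C (ctens C A B)) \<and>
     (\<forall>f g. ccomp C (csym C (ccod C f) (ccod C g)) (ctensA C f g)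
          = ccomp C (ctensA C g f) (csym C (cdom C f) (cdom C g))) \<and>
     \<comment> \<open>hexagon\<close>
     (\<forall>A B D.
        ccomp C (calpha C B D A) (ccomp C (csym C A (ctens C B D)) (calpha C A B D))
        = ccomp C (ctensA C (cid C B) (csym C A D))
            (ccomp C (calpha C B A D) (ctensA C (csym C A B) (cid C D))))"

definition is_compact_closed :: "('o, 'm) cc \<Rightarrow> bool" where
  "is_compact_closed C \<longleftrightarrow>
     is_symmetric_monoidal C \<and>
     (\<forall>A. ceta C A \<in> hom C (cunit C) (ctens C A (cdual C A)) \<and>
          ceps C A \<in> hom C (ctens C (cdual C A) A) (cunit C) \<and>
          ccomp C (crho C A)
            (ccomp C (ctensA C (cid C A) (ceps C A))
              (ccomp C (calpha C A (cdual C A) A)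
                (ccomp C (ctensA C (ceta C A) (cid C A)) (clami C A)))) = cid C A \<and>
          ccomp C (clam C (cdual C A))
            (ccomp C (ctensA C (ceps C A) (cid C (cdual C A)))
              (ccomp C (calphai C (cdual C A) A (cdual C A))
                (ccomp C (ctensA C (cid C (cdual C A)) (ceta C A)) (crhoi C (cdual C A)))))
          = cid C (cdual C A))"

text \<open>split: X*(x)X ~= X*(x)(I(x)X) --(1 (x) (eta_X (x) 1))--> X*(x)((X(x)X*)(x)X).
  merge: X*(x)((X(x)X*)(x)X) --(1 (x) (eps_{X*} (x) 1))--> X*(x)(I(x)X) ~= X*(x)X.
  (The merge is well-typed when X** = X, e.g. for X = N below where N* = N.)\<close>

definition frob_split :: "('o, 'm) cc \<Rightarrow> 'o \<Rightarrow> 'm" where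
  "frob_split C X =
     ccomp C (ctensA C (cid C (cdual C X)) (ctensA C (ceta C X) (cid C X)))
             (ctensA C (cid C (cdual C X)) (clami C X))"

definition frob_merge :: "('o, 'm) cc \<Rightarrow> 'o \<Rightarrow> 'm" where
  "frob_merge C X =
     ccomp C (ctensA C (cid C (cdual C X)) (clam C X))
             (ctensA C (cid C (cdual C X)) (ctensA C (ceps C (cdual C X)) (cid C X)))"

definition is_unit_object_endo :: "('o, 'm) cc \<Rightarrow> 'o \<Rightarrow> bool" where
  "is_unit_object_endo C N \<longleftrightarrow>
     bij_betw (\<lambda>f. ctensA C (cid C N) f) (hom C N N) (hom C N N) \<and>
     bij_betw (\<lambda>f. ctensA C f (cid C N)) (hom C N N) (hom C N N)"

end

theory Submission
  imports Defs
begin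

text \<open>With trivial scalars, the left partial trace over X (closed up with the symmetry, the unit
  and the counit) sends g \<otimes> h to h for every endomorphism g of X, because the loop around g is
  a scalar; so ident X \<otimes> (-) is injective. At N the split and merge are ident N \<otimes> c and
  ident N \<otimes> m with c = (\<eta> \<otimes> 1) \<lambda>\<inverse> and m = \<lambda> (\<epsilon> \<otimes> 1). Since \<epsilon> \<eta> = 1 we get m c = 1,
  whence \<nabla>\<Delta> = 1, and c f m = \<eta>\<epsilon> \<otimes> f, whence \<Delta>\<nabla> = 1 \<otimes> (\<eta>\<epsilon> \<otimes> 1), which is the identity
  iff \<eta>\<epsilon> \<otimes> 1 = 1. Under that condition 1 \<otimes> (-) is conjugation by the isomorphism c and
  (-) \<otimes> 1 is its conjugate by the symmetry, so both are bijective. Conversely, if 1 \<otimes> (-) is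
  onto, then \<eta>\<epsilon> \<otimes> 1 = 1 \<otimes> f for some f, and tracing out the first factor gives f = 1.\<close>

locale compact_closed_category =
  fixes C :: "('o, 'm) cc"
  assumes compact_closed: "is_compact_closed C"
begin

abbreviation comp (infixr "\<cdot>" 55) where "g \<cdot> f \<equiv> ccomp C g f"
abbreviation tensor (infixr "\<otimes>" 60) where "f \<otimes> g \<equiv> ctensA C f g"
abbreviation tensor_obj (infixr "\<odot>" 60) where "A \<odot> B \<equiv> ctens C A B"
abbreviation I where "I \<equiv> cunit C"
abbreviation src where "src \<equiv> cdom C"
abbreviation trg where "trg \<equiv> ccod C"
abbreviation ident where "ident \<equiv> cid C"

lemma is_category: "is_category C" and is_monoidal: "is_monoidal C"
  and is_symmetric_monoidal: "is_symmetric_monoidal C"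
  using compact_closed
  unfolding is_compact_closed_def is_symmetric_monoidal_def is_monoidal_def by auto

lemma src_ident [simp]: "src (ident A) = A" and trg_ident [simp]: "trg (ident A) = A"
  using is_category unfolding is_category_def hom_def by auto

lemma src_comp [simp]: "trg f = src g \<Longrightarrow> src (g \<cdot> f) = src f"
  and trg_comp [simp]: "trg f = src g \<Longrightarrow> trg (g \<cdot> f) = trg g"
  using is_category unfolding is_category_def hom_def by auto

lemma comp_ident_left [simp]: "trg f = A \<Longrightarrow> ident A \<cdot> f = f"
  and comp_ident_right [simp]: "src f = A \<Longrightarrow> f \<cdot> ident A = f"
  using is_category unfolding is_category_def by auto

lemma comp_assoc [simp]:
  "trg f = src g \<Longrightarrow> trg g = src h \<Longrightarrow> (h \<cdot> g) \<cdot> f = h \<cdot> g \<cdot> f"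
  using is_category unfolding is_category_def by auto

lemma src_tensor [simp]: "src (f \<otimes> g) = src f \<odot> src g"
  and trg_tensor [simp]: "trg (f \<otimes> g) = trg f \<odot> trg g"
  using is_monoidal unfolding is_monoidal_def hom_def by auto

lemma tensor_ident [simp]: "ident A \<otimes> ident B = ident (A \<odot> B)"
  using is_monoidal unfolding is_monoidal_def by auto

lemma interchange:
  "trg f = src g \<Longrightarrow> trg h = src k \<Longrightarrow> (g \<otimes> k) \<cdot> (f \<otimes> h) = (g \<cdot> f) \<otimes> (k \<cdot> h)"
  using is_monoidal unfolding is_monoidal_def by auto

lemma interchange_assoc:
  "trg f = src g \<Longrightarrow> trg h = src k \<Longrightarrow> trg x = src f \<odot> src h \<Longrightarrow>
    (g \<otimes> k) \<cdot> (f \<otimes> h) \<cdot> x = ((g \<cdot> f) \<otimes> (k \<cdot> h)) \<cdot> x"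
  by (metis comp_assoc interchange src_tensor trg_tensor)

lemma src_alpha [simp]: "src (calpha C A B D) = (A \<odot> B) \<odot> D"
  and trg_alpha [simp]: "trg (calpha C A B D) = A \<odot> B \<odot> D"
  and src_alphai [simp]: "src (calphai C A B D) = A \<odot> B \<odot> D"
  and trg_alphai [simp]: "trg (calphai C A B D) = (A \<odot> B) \<odot> D"
  and alphai_alpha: "calphai C A B D \<cdot> calpha C A B D = ident ((A \<odot> B) \<odot> D)"
  using is_monoidal unfolding is_monoidal_def hom_def by auto

lemma alpha_natural:
  "calpha C (trg f) (trg g) (trg h) \<cdot> ((f \<otimes> g) \<otimes> h)
     = (f \<otimes> g \<otimes> h) \<cdot> calpha C (src f) (src g) (src h)"
  using is_monoidal unfolding is_monoidal_def by auto

lemma src_lam [simp]: "src (clam C A) = I \<odot> A" and trg_lam [simp]: "trg (clam C A) = A"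
  and src_lami [simp]: "src (clami C A) = A" and trg_lami [simp]: "trg (clami C A) = I \<odot> A"
  and lam_lami: "clam C A \<cdot> clami C A = ident A"
  and lami_lam: "clami C A \<cdot> clam C A = ident (I \<odot> A)"
  using is_monoidal unfolding is_monoidal_def hom_def by auto

lemma lam_natural: "clam C (trg f) \<cdot> (ident I \<otimes> f) = f \<cdot> clam C (src f)"
  using is_monoidal unfolding is_monoidal_def by auto

lemma src_sym [simp]: "src (csym C A B) = A \<odot> B" and trg_sym [simp]: "trg (csym C A B) = B \<odot> A"
  and sym_sym: "csym C B A \<cdot> csym C A B = ident (A \<odot> B)"
  using is_symmetric_monoidal unfolding is_symmetric_monoidal_def hom_def by auto

lemma sym_natural: "csym C (trg f) (trg g) \<cdot> (f \<otimes> g) = (g \<otimes> f) \<cdot> csym C (src f) (src g)"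
  using is_symmetric_monoidal unfolding is_symmetric_monoidal_def by auto

lemma src_eta [simp]: "src (ceta C A) = I" and trg_eta [simp]: "trg (ceta C A) = A \<odot> cdual C A"
  and src_eps [simp]: "src (ceps C A) = cdual C A \<odot> A" and trg_eps [simp]: "trg (ceps C A) = I"
  using compact_closed unfolding is_compact_closed_def hom_def by auto

lemma lam_tensor_lami: "clam C (trg f) \<cdot> (ident I \<otimes> f) \<cdot> clami C (src f) = f"
proof -
  have "clam C (trg f) \<cdot> (ident I \<otimes> f) \<cdot> clami C (src f) = (f \<cdot> clam C (src f)) \<cdot> clami C (src f)"
    by (simp flip: lam_natural)
  also have "\<dots> = f"
    by (simp add: lam_lami)
  finally show ?thesis .
qed

lemma alphai_tensor_alpha:
  "calphai C (trg f) (trg g) (trg h) \<cdot> (f \<otimes> g \<otimes> h) \<cdot> calpha C (src f) (src g) (src h)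
     = (f \<otimes> g) \<otimes> h"
proof -
  have "calphai C (trg f) (trg g) (trg h) \<cdot> (f \<otimes> g \<otimes> h) \<cdot> calpha C (src f) (src g) (src h)
      = calphai C (trg f) (trg g) (trg h) \<cdot> calpha C (trg f) (trg g) (trg h) \<cdot> ((f \<otimes> g) \<otimes> h)"
    by (simp flip: alpha_natural)
  also have "\<dots> = (f \<otimes> g) \<otimes> h"
    by (simp flip: comp_assoc add: alphai_alpha)
  finally show ?thesis .
qed

lemma sym_ident_tensor_sym:
  "csym C X (trg f) \<cdot> (ident X \<otimes> f) \<cdot> csym C (src f) X = f \<otimes> ident X"
proof -
  have "csym C X (trg f) \<cdot> (ident X \<otimes> f) \<cdot> csym C (src f) X
      = ((f \<otimes> ident X) \<cdot> csym C X (src f)) \<cdot> csym C (src f) X"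
    using sym_natural[of "ident X" f] by (simp flip: comp_assoc)
  also have "\<dots> = f \<otimes> ident X"
    by (simp add: sym_sym)
  finally show ?thesis .
qed

lemma lam_sandwich:
  assumes "src u = I" and "trg v = I"
  shows "((u \<otimes> ident (trg f)) \<cdot> clami C (trg f)) \<cdot> f \<cdot> clam C (src f) \<cdot> (v \<otimes> ident (src f))
    = (u \<cdot> v) \<otimes> f"
proof -
  have "f \<cdot> clam C (src f) \<cdot> (v \<otimes> ident (src f)) = (f \<cdot> clam C (src f)) \<cdot> (v \<otimes> ident (src f))"
    using assms by simp
  also have "\<dots> = clam C (trg f) \<cdot> (v \<otimes> f)"
    using assms by (simp flip: lam_natural add: interchange)
  finally have "f \<cdot> clam C (src f) \<cdot> (v \<otimes> ident (src f)) = clam C (trg f) \<cdot> (v \<otimes> f)" .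
  then have "((u \<otimes> ident (trg f)) \<cdot> clami C (trg f)) \<cdot> f \<cdot> clam C (src f) \<cdot> (v \<otimes> ident (src f))
      = (u \<otimes> ident (trg f)) \<cdot> (clami C (trg f) \<cdot> clam C (trg f)) \<cdot> (v \<otimes> f)"
    using assms by simp
  also have "\<dots> = (u \<cdot> v) \<otimes> f"
    using assms by (simp add: lami_lam interchange)
  finally show ?thesis .
qed

lemma bij_betw_conj_iso:
  assumes "src a = X" "trg a = X" "src b = X" "trg b = X"
    and "b \<cdot> a = ident X" and "a \<cdot> b = ident X"
  shows "bij_betw (\<lambda>f. a \<cdot> f \<cdot> b) (hom C X X) (hom C X X)"
proof (rule bij_betw_byWitness[where f' = "\<lambda>f. b \<cdot> f \<cdot> a"])
  have cancel: "b \<cdot> a \<cdot> r = r" "a \<cdot> b \<cdot> r = r" if "trg r = X" for r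
    using assms that by (simp_all flip: comp_assoc)
  show "\<forall>f\<in>hom C X X. b \<cdot> (a \<cdot> f \<cdot> b) \<cdot> a = f" "\<forall>f\<in>hom C X X. a \<cdot> (b \<cdot> f \<cdot> a) \<cdot> b = f"
    using assms by (auto simp: hom_def cancel)
  show "(\<lambda>f. a \<cdot> f \<cdot> b) ` hom C X X \<subseteq> hom C X X" "(\<lambda>f. b \<cdot> f \<cdot> a) ` hom C X X \<subseteq> hom C X X"
    using assms by (auto simp: hom_def)
qed

lemma frob_split_eq_tensor:
  "frob_split C X = ident (cdual C X) \<otimes> ((ceta C X \<otimes> ident X) \<cdot> clami C X)"
  unfolding frob_split_def by (simp add: interchange)

lemma frob_merge_eq_tensor:
  "frob_merge C X = ident (cdual C X) \<otimes> (clam C X \<cdot> (ceps C (cdual C X) \<otimes> ident X))"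
  unfolding frob_merge_def by (simp add: interchange)

text \<open>Partial trace of k : X \<odot> A \<rightarrow> X \<odot> B; A and B are passed explicitly since they cannot be
  read off from the (non-strict) tensor X \<odot> A.\<close>
definition ltrace where
  "ltrace X A B k =
     clam C B \<cdot> (ceps C X \<otimes> ident B) \<cdot> calphai C (cdual C X) X B \<cdot> (ident (cdual C X) \<otimes> k)
       \<cdot> calpha C (cdual C X) X A \<cdot> ((csym C X (cdual C X) \<cdot> ceta C X) \<otimes> ident A) \<cdot> clami C A"

end

locale trivial_scalars = compact_closed_category +
  assumes scalars: "hom C I I = {ident I}"
begin

lemma scalar_eq_ident: "src s = I \<Longrightarrow> trg s = I \<Longrightarrow> s = ident I"
  using scalars unfolding hom_def by blast

lemma ltrace_tensor:
  assumes "src g = X" and "trg g = X"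
  shows "ltrace X (src h) (trg h) (g \<otimes> h) = h"
proof -
  let ?D = "cdual C X" and ?c = "csym C X (cdual C X) \<cdot> ceta C X"
  have "calphai C ?D X (trg h) \<cdot> (ident ?D \<otimes> g \<otimes> h) \<cdot> calpha C ?D X (src h)
      = (ident ?D \<otimes> g) \<otimes> h"
    using alphai_tensor_alpha[of "ident ?D" g h] assms by simp
  then have "ltrace X (src h) (trg h) (g \<otimes> h)
      = clam C (trg h) \<cdot> (ceps C X \<otimes> ident (trg h)) \<cdot> ((ident ?D \<otimes> g) \<otimes> h) \<cdot> (?c \<otimes> ident (src h))
          \<cdot> clami C (src h)"
    unfolding ltrace_def using assms by (simp flip: comp_assoc)
  also have "\<dots> = clam C (trg h) \<cdot> ((ceps C X \<cdot> (ident ?D \<otimes> g) \<cdot> ?c) \<otimes> h) \<cdot> clami C (src h)"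
    using assms by (simp add: interchange_assoc)
  also have "ceps C X \<cdot> (ident ?D \<otimes> g) \<cdot> ?c = ident I"
    using assms by (simp add: scalar_eq_ident)
  finally show ?thesis
    using lam_tensor_lami by simp
qed

lemma tensor_ident_left_cancel:
  assumes "ident X \<otimes> g = ident X \<otimes> h" and "src g = src h" and "trg g = trg h"
  shows "g = h"
  by (metis assms ltrace_tensor src_ident trg_ident)

end

locale strictly_reflexive_object = trivial_scalars +
  fixes N
  assumes dual_N [simp]: "cdual C N = N" and tensor_N [simp]: "N \<odot> N = N"
begin

definition split_core where "split_core = (ceta C N \<otimes> ident N) \<cdot> clami C N"
definition merge_core where "merge_core = clam C N \<cdot> (ceps C N \<otimes> ident N)"
definition eta_eps where "eta_eps = ceta C N \<cdot> ceps C N"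

lemma src_split_core [simp]: "src split_core = N" and trg_split_core [simp]: "trg split_core = N"
  and src_merge_core [simp]: "src merge_core = N" and trg_merge_core [simp]: "trg merge_core = N"
  and src_eta_eps [simp]: "src eta_eps = N" and trg_eta_eps [simp]: "trg eta_eps = N"
  unfolding split_core_def merge_core_def eta_eps_def by simp_all

lemma frob_split_N: "frob_split C N = ident N \<otimes> split_core"
  unfolding split_core_def frob_split_eq_tensor dual_N ..

lemma frob_merge_N: "frob_merge C N = ident N \<otimes> merge_core"
  unfolding merge_core_def frob_merge_eq_tensor dual_N ..

lemma merge_core_split_core: "merge_core \<cdot> split_core = ident N"
proof -
  have "merge_core \<cdot> split_core = clam C N \<cdot> ((ceps C N \<cdot> ceta C N) \<otimes> ident N) \<cdot> clami C N"
    unfolding merge_core_def split_core_def by (simp add: interchange_assoc)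
  also have "ceps C N \<cdot> ceta C N = ident I"
    by (simp add: scalar_eq_ident)
  finally show ?thesis
    using lam_tensor_lami[of "ident N"] by simp
qed

lemma split_core_conj: "src f = N \<Longrightarrow> trg f = N \<Longrightarrow> split_core \<cdot> f \<cdot> merge_core = eta_eps \<otimes> f"
  using lam_sandwich[of "ceta C N" "ceps C N" f]
  unfolding split_core_def merge_core_def eta_eps_def by simp

lemma frob_merge_split: "frob_merge C N \<cdot> frob_split C N = ident N"
  by (simp add: frob_split_N frob_merge_N interchange merge_core_split_core)

lemma frob_split_merge: "frob_split C N \<cdot> frob_merge C N = ident N \<otimes> eta_eps \<otimes> ident N"
  using split_core_conj[of "ident N"] by (simp add: frob_split_N frob_merge_N interchange)

lemma frob_split_merge_eq_ident_iff:
  "frob_split C N \<cdot> frob_merge C N = ident N \<longleftrightarrow> eta_eps \<otimes> ident N = ident N"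
proof
  assume "frob_split C N \<cdot> frob_merge C N = ident N"
  then have "ident N \<otimes> eta_eps \<otimes> ident N = ident N \<otimes> ident N"
    by (simp add: frob_split_merge)
  then show "eta_eps \<otimes> ident N = ident N"
    by (rule tensor_ident_left_cancel) simp_all
qed (simp add: frob_split_merge)

lemma unit_object_if_eta_eps_tensor_ident:
  assumes eta_eps_ident: "eta_eps \<otimes> ident N = ident N"
  shows "is_unit_object_endo C N"
proof -
  let ?\<sigma> = "csym C N N"
  have "split_core \<cdot> merge_core = ident N"
    using split_core_conj[of "ident N"] eta_eps_ident by simp
  then have "bij_betw (\<lambda>f. split_core \<cdot> f \<cdot> merge_core) (hom C N N) (hom C N N)"
    by (intro bij_betw_conj_iso) (simp_all add: merge_core_split_core)
  moreover have "split_core \<cdot> f \<cdot> merge_core = ident N \<otimes> f" if "f \<in> hom C N N" for f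
  proof -
    have "split_core \<cdot> f \<cdot> merge_core = (eta_eps \<otimes> ident N) \<cdot> (ident N \<otimes> f)"
      using that by (simp add: hom_def split_core_conj interchange)
    then show ?thesis
      using that eta_eps_ident by (simp add: hom_def)
  qed
  ultimately have left: "bij_betw (\<lambda>f. ident N \<otimes> f) (hom C N N) (hom C N N)"
    by (simp cong: bij_betw_cong)
  have "bij_betw (\<lambda>g. ?\<sigma> \<cdot> g \<cdot> ?\<sigma>) (hom C N N) (hom C N N)"
    by (rule bij_betw_conj_iso) (simp_all add: sym_sym)
  with left have "bij_betw ((\<lambda>g. ?\<sigma> \<cdot> g \<cdot> ?\<sigma>) \<circ> (\<lambda>f. ident N \<otimes> f)) (hom C N N) (hom C N N)"
    by (rule bij_betw_trans)
  moreover have "?\<sigma> \<cdot> (ident N \<otimes> f) \<cdot> ?\<sigma> = f \<otimes> ident N" if "f \<in> hom C N N" for f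
    using that sym_ident_tensor_sym[of N f] by (simp add: hom_def)
  ultimately have "bij_betw (\<lambda>f. f \<otimes> ident N) (hom C N N) (hom C N N)"
    by (simp cong: bij_betw_cong)
  with left show ?thesis
    unfolding is_unit_object_endo_def ..
qed

lemma eta_eps_tensor_ident_if_unit_object:
  assumes "is_unit_object_endo C N"
  shows "eta_eps \<otimes> ident N = ident N"
proof -
  have "eta_eps \<otimes> ident N \<in> (\<lambda>f. ident N \<otimes> f) ` hom C N N"
    using assms unfolding is_unit_object_endo_def bij_betw_def by (simp add: hom_def)
  then obtain f where f: "src f = N" "trg f = N" and eq: "ident N \<otimes> f = eta_eps \<otimes> ident N"
    by (auto simp: hom_def)
  have "f = ltrace N N N (ident N \<otimes> f)"
    using ltrace_tensor[of "ident N" N f] f by simp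
  also have "\<dots> = ident N"
    using ltrace_tensor[of eta_eps N "ident N"] by (simp add: eq)
  finally show ?thesis
    using eq by simp
qed

end

theorem mainTheorem10:
  fixes C :: "('o, 'm) cc" and N :: 'o
  assumes cc: "is_compact_closed C"
    and refl: "ctens C (cdual C N) N = N"
    and dualN: "cdual C N = N"
    and tensN: "ctens C N N = N"
    and scalars: "hom C (cunit C) (cunit C) = {cid C (cunit C)}"
  shows "ccomp C (frob_merge C N) (frob_split C N) = cid C N \<and>
         (ccomp C (frob_split C N) (frob_merge C N) = cid C N
           \<longleftrightarrow> is_unit_object_endo C N)"
proof -
  \<comment> \<open>refl is implied by dualN and tensN.\<close>
  interpret strictly_reflexive_object C N
    using cc scalars dualN tensN by unfold_locales
  show ?thesis
    using frob_merge_split frob_split_merge_eq_ident_iff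
      unit_object_if_eta_eps_tensor_ident eta_eps_tensor_ident_if_unit_object
    by blast
qed

end
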